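(* Let $n,t\in\mathbb{N}$ with $n > t \geq 2$. Then (a) $d_{\max}(n, n-t)=3$ if and only if $2^{t-1} < n < 2^{t}$; (b) $d_{\max}(n, n-t)=4$ if and only if $s_{\max}(t) \leq n \leq 2^{t-1}$; (c) $d_{\max}(n, n-t)=5$ if and only if $s_{\max}(t-1) < n < s_{\max}(t)$; (d) $d_{\max}(n, n-t)\geq 6$ if and only if $n \leq s_{\max}(t-1)$.
   Context: $\mathbb{F}_2^t$ denotes the $t$-dimensional vector space over $\mathbb{F}_2$. A subset $M\subseteq \mathbb{F}_2^t$ is called Sidon if $m_1+m_2\neq m_3+m_4$ for all pairwise distinct $m_1,m_2,m_3,m_4\in M$. $s_{\max}(t)$ denotes the maximum size of a Sidon set in $\mathbb{F}_2^t$. A binary linear code of length $n$ and dimension $k$ is a $k$-dimensional subspace of $\mathbb{F}_2^n$; its minimum distance is the minimum Hamming weight of its nonzero codewords. $d_{\max}(n,k)$ is the maximum $d$ such that there exists a binary linear code of length $n$, dimension $k$ and minimum distance $d$. *)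

theory Defs
  imports Main "HOL-Library.Z2" "HOL-Library.Function_Algebras"
begin

text \<open>Vectors of F_2^n: functions nat => bit (bit = the field F_2) vanishing outside {0..<n}.
  Addition is pointwise (Function_Algebras).\<close>

type_synonym vec = "nat \<Rightarrow> bit"

definition F2vec :: "nat \<Rightarrow> vec set" where
  "F2vec n = {v. \<forall>i\<ge>n. v i = 0}"

definition lincomb :: "vec set \<Rightarrow> (vec \<Rightarrow> bit) \<Rightarrow> vec" where
  "lincomb B c = (\<Sum>b\<in>B. (\<lambda>i. c b * b i))"

definition lin_span :: "vec set \<Rightarrow> vec set" where
  "lin_span B = {lincomb B c | c. True}"

definition lin_indep :: "vec set \<Rightarrow> bool" where
  "lin_indep B = (\<forall>c. lincomb B c = 0 \<longrightarrow> (\<forall>b\<in>B. c b = 0))"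

definition is_linear_code :: "nat \<Rightarrow> nat \<Rightarrow> vec set \<Rightarrow> bool" where
  "is_linear_code n k C =
     (C \<subseteq> F2vec n \<and> (\<exists>B. finite B \<and> B \<subseteq> F2vec n \<and> card B = k \<and> lin_indep B \<and> lin_span B = C))"

definition hamming_weight :: "vec \<Rightarrow> nat" where
  "hamming_weight v = card {i. v i \<noteq> 0}"

definition min_dist :: "vec set \<Rightarrow> nat" where
  "min_dist C = Min (hamming_weight ` (C - {0}))"

definition d_max :: "nat \<Rightarrow> nat \<Rightarrow> nat" where
  "d_max n k = Max {min_dist C | C. is_linear_code n k C}"

definition sidon :: "vec set \<Rightarrow> bool" where
  "sidon M = (\<forall>m1\<in>M. \<forall>m2\<in>M. \<forall>m3\<in>M. \<forall>m4\<in>M.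
      distinct [m1, m2, m3, m4] \<longrightarrow> m1 + m2 \<noteq> m3 + m4)"

definition s_max :: "nat \<Rightarrow> nat" where
  "s_max t = Max {card M | M. M \<subseteq> F2vec t \<and> sidon M}"

end

theory Submission
  imports Defs "HOL-Library.Indicator_Function"
begin

text \<open>
  A linear [n, n - t] code has minimum distance at least d iff it is the kernel of a t x n
  parity-check matrix in which no nonempty set of fewer than d columns sums to zero. For d \<ge> 3
  the columns are distinct, so the question becomes how large a set A in F_2^t can be in which
  no nonempty subset of size below d sums to zero. For d = 3 this only asks 0 \<notin> A.
  For d = 4 the sets A and a + A are disjoint for a in A, so |A| \<le> 2^(t-1), and the vectors
  with last coordinate 1 attain this. For d = 5 the condition says exactly that A \<union> {0} is a
  Sidon set, and translating a largest Sidon set so that it contains 0 gives the converse.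
  For d = 6, a linear map F_2^t \<rightarrow> F_2^(t-1) whose kernel is spanned by some a in A maps A
  injectively onto a Sidon set; conversely, appending a coordinate 1 to a Sidon set of
  F_2^(t-1) works, because sums of odd size then have last coordinate 1.
\<close>

section \<open>The vector space F_2^n\<close>

(* Z2 rewrites + and * on bit into operations on Booleans, which defeats ring reasoning in F_2. *)
declare add_bit_eq_xor [simp del] mult_bit_eq_and [simp del]

definition scale_vec :: "bit \<Rightarrow> vec \<Rightarrow> vec" where
  "scale_vec c v = (\<lambda>i. c * v i)"

lemma scale_vec_apply [simp]: "scale_vec c v i = c * v i"
  by (simp add: scale_vec_def)

interpretation V: vector_space scale_vec
  by unfold_locales (auto simp: scale_vec_def fun_eq_iff algebra_simps)

interpretation VP: vector_space_pair scale_vec scale_vec ..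

lemma sum_fun_apply: "(\<Sum>i\<in>A. f i) x = (\<Sum>i\<in>A. f i x)"
  by (induction A rule: infinite_finite_induct) auto

lemma of_nat_bit: "(of_nat k :: bit) = (if even k then 0 else 1)"
  by (induction k) auto

lemma vec_add_self [simp]: "(x :: vec) + x = 0"
  by (simp add: fun_eq_iff)

lemma vec_add_eq_0_iff: "(x :: vec) + y = 0 \<longleftrightarrow> x = y"
  by (metis add.assoc add_0_right vec_add_self)

lemma scale_vec_bit: "scale_vec c v = (if c = 0 then 0 else v)"
  by (cases c) (auto simp: scale_vec_def fun_eq_iff)

definition unit_vec :: "nat \<Rightarrow> vec" where
  "unit_vec i = indicator {i}"

lemma inj_indicator_vec: "inj (\<lambda>S. indicator S :: vec)"
proof (rule injI)
  fix S T :: "nat set" assume eq: "(indicator S :: vec) = indicator T"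
  have "x \<in> S \<longleftrightarrow> x \<in> T" for x
    using fun_cong[OF eq, of x] by (cases "x \<in> S"; cases "x \<in> T") simp_all
  then show "S = T" by blast
qed

lemma F2vec_eq_indicators: "F2vec n = (\<lambda>S. indicator S) ` Pow {..<n}"
proof
  show "F2vec n \<subseteq> (\<lambda>S. indicator S) ` Pow {..<n}"
  proof
    fix x assume x: "x \<in> F2vec n"
    have "x = indicator {i. x i \<noteq> 0}"
      by (auto simp: fun_eq_iff indicator_def)
    moreover have "{i. x i \<noteq> 0} \<subseteq> {..<n}"
      using x by (auto simp: F2vec_def not_less[symmetric])
    ultimately show "x \<in> (\<lambda>S. indicator S) ` Pow {..<n}" by blast
  qed
qed (auto simp: F2vec_def indicator_def)

lemma finite_F2vec: "finite (F2vec n)"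
  by (simp add: F2vec_eq_indicators)

lemma card_F2vec: "card (F2vec n) = 2 ^ n"
  by (simp add: F2vec_eq_indicators card_image inj_on_subset[OF inj_indicator_vec] card_Pow)

lemma hamming_weight_indicator: "hamming_weight (indicator S :: vec) = card S"
  by (simp add: hamming_weight_def indicator_def)

lemma indicator_nonzero: "S \<noteq> {} \<Longrightarrow> (indicator S :: vec) \<noteq> 0"
  by (auto simp: fun_eq_iff indicator_def)

lemma indicator_eq_sum_unit_vec: "finite S \<Longrightarrow> (indicator S :: vec) = (\<Sum>i\<in>S. unit_vec i)"
  by (auto simp: fun_eq_iff sum_fun_apply unit_vec_def indicator_def)

lemma subspace_F2vec: "V.subspace (F2vec n)"
  by (auto simp: V.subspace_def F2vec_def scale_vec_def)

lemma unit_vec_in_F2vec: "i < n \<Longrightarrow> unit_vec i \<in> F2vec n"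
  by (auto simp: unit_vec_def F2vec_def)

lemma span_unit_vec: "V.span (unit_vec ` {..<n}) = F2vec n"
proof
  show "V.span (unit_vec ` {..<n}) \<subseteq> F2vec n"
    by (rule V.span_minimal) (auto intro: unit_vec_in_F2vec subspace_F2vec)
  show "F2vec n \<subseteq> V.span (unit_vec ` {..<n})"
  proof
    fix x assume "x \<in> F2vec n"
    then obtain S where S: "S \<subseteq> {..<n}" "x = indicator S"
      by (auto simp: F2vec_eq_indicators)
    then have "x = (\<Sum>i\<in>S. unit_vec i)"
      by (simp add: indicator_eq_sum_unit_vec finite_subset)
    also have "\<dots> \<in> V.span (unit_vec ` {..<n})"
      using S by (intro V.span_sum V.span_base) auto
    finally show "x \<in> V.span (unit_vec ` {..<n})" .
  qed
qed

lemma inj_unit_vec: "inj unit_vec"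
  unfolding unit_vec_def by (rule injI) (simp add: inj_eq[OF inj_indicator_vec])

lemma independent_unit_vec: "V.independent (unit_vec ` A)"
  unfolding V.dependent_explicit
proof clarify
  fix T u v
  assume T: "finite T" "T \<subseteq> unit_vec ` A" and sum0: "(\<Sum>w\<in>T. scale_vec (u w) w) = 0"
    and v: "v \<in> T" "u v \<noteq> 0"
  obtain j where j: "v = unit_vec j" using T v by auto
  have "(\<Sum>w\<in>T. scale_vec (u w) w) j = (\<Sum>w\<in>T. u w * w j)"
    by (simp add: sum_fun_apply scale_vec_def)
  also have "\<dots> = (\<Sum>w\<in>T. if w = v then u w else 0)"
  proof (rule sum.cong)
    fix w assume "w \<in> T"
    then obtain i where "w = unit_vec i" using T by auto
    then show "u w * w j = (if w = v then u w else 0)"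
      using j inj_unit_vec by (auto simp: inj_eq) (auto simp: unit_vec_def)
  qed simp
  also have "\<dots> = u v" using T v by simp
  finally show False using sum0 v by simp
qed

lemma independent_F2vec_card_le:
  assumes "B \<subseteq> F2vec n" "V.independent B"
  shows "finite B" "card B \<le> n"
  using V.independent_span_bound[of "unit_vec ` {..<n}" B] assms inj_unit_vec
  by (auto simp: span_unit_vec card_image inj_on_subset)

lemma basis_F2vec_card:
  assumes "B \<subseteq> F2vec n" "V.independent B" "F2vec n \<subseteq> V.span B"
  shows "card B = n"
proof -
  have "card (unit_vec ` {..<n}) = V.dim (F2vec n)"
    by (rule V.basis_card_eq_dim) (auto simp: span_unit_vec unit_vec_in_F2vec independent_unit_vec)
  moreover have "card B = V.dim (F2vec n)"
    by (rule V.basis_card_eq_dim) (use assms in auto)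
  ultimately show ?thesis
    using inj_unit_vec by (simp add: card_image inj_on_subset)
qed

lemma linear_indicator:
  assumes "Vector_Spaces.linear scale_vec scale_vec g" "finite S"
  shows "g (indicator S) = (\<Sum>i\<in>S. g (unit_vec i))"
  unfolding indicator_eq_sum_unit_vec[OF assms(2)] by (rule VP.linear_sum[OF assms(1)])

lemma kernel_on_span_Un:
  assumes lin: "Vector_Spaces.linear scale_vec scale_vec g" and R: "finite R"
    "V.independent (g ` R)" "inj_on g R"
    and B: "\<And>b. b \<in> B \<Longrightarrow> g b = 0" and x: "x \<in> V.span (B \<union> R)"
  shows "g x = 0 \<longleftrightarrow> x \<in> V.span B"
proof
  have g0: "g y = 0" if "y \<in> V.span B" for y
    using VP.linear_eq_0_on_span[OF lin B that] .
  show "x \<in> V.span B \<Longrightarrow> g x = 0" by (rule g0)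
  assume "g x = 0"
  obtain y z where yz: "x = y + z" "y \<in> V.span B" "z \<in> V.span R"
    using x by (auto simp: V.span_Un)
  then have "g z = 0"
    using \<open>g x = 0\<close> g0 VP.linear_add[OF lin] by simp
  then have "z = 0"
    using VP.linear_indep_image_lemma[OF lin R yz(3)] by blast
  then show "x \<in> V.span B"
    using yz by simp
qed

lemma linear_map_with_kernel:
  assumes B: "B \<subseteq> F2vec n" "V.independent B" and card_B: "card B + t = n"
  obtains g where "Vector_Spaces.linear scale_vec scale_vec g" "g ` F2vec n \<subseteq> F2vec t"
    "\<And>x. x \<in> F2vec n \<Longrightarrow> g x = 0 \<longleftrightarrow> x \<in> V.span B"
proof -
  obtain B' where B': "B \<subseteq> B'" "B' \<subseteq> F2vec n" "V.independent B'" "F2vec n \<subseteq> V.span B'"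
    using V.maximal_independent_subset_extend[OF B] by blast
  have "finite B'"
    using independent_F2vec_card_le(1)[OF B'(2,3)] .
  define R where "R = B' - B"
  have "finite R" "card R = t"
    using card_B basis_F2vec_card[OF B'(2-4)] B'(1) \<open>finite B'\<close>
    by (auto simp: R_def card_Diff_subset finite_subset)
  obtain \<phi> where \<phi>: "bij_betw \<phi> R {..<t}"
    using ex_bij_betw_finite_nat[OF \<open>finite R\<close>] \<open>card R = t\<close> by (auto simp: atLeast0LessThan)
  define f where "f b = (if b \<in> R then unit_vec (\<phi> b) else 0)" for b
  define g where "g = VP.construct B' f"
  have lin: "Vector_Spaces.linear scale_vec scale_vec g"
    unfolding g_def by (rule VP.linear_construct[OF B'(3)])
  have g_basis: "g b = f b" if "b \<in> B'" for b
    unfolding g_def by (rule VP.construct_basis[OF B'(3) that])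
  have "g ` F2vec n \<subseteq> F2vec t"
  proof -
    have "range g = V.span (f ` B')"
      unfolding g_def by (rule VP.range_construct_eq_span[OF B'(3)])
    also have "\<dots> \<subseteq> F2vec t"
      using \<phi> by (intro V.span_minimal subspace_F2vec)
        (auto simp: f_def bij_betw_def intro!: unit_vec_in_F2vec V.subspace_0[OF subspace_F2vec])
    finally show ?thesis by blast
  qed
  moreover have "g x = 0 \<longleftrightarrow> x \<in> V.span B" if "x \<in> F2vec n" for x
  proof (rule kernel_on_span_Un[OF lin \<open>finite R\<close>])
    have g_R: "\<And>r. r \<in> R \<Longrightarrow> g r = unit_vec (\<phi> r)"
      using g_basis by (simp add: R_def f_def)
    have "g ` R = unit_vec ` \<phi> ` R"
      unfolding image_image by (rule image_cong[OF refl g_R])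
    also have "\<phi> ` R = {..<t}"
      using \<phi> by (simp add: bij_betw_def)
    finally show "V.independent (g ` R)"
      by (simp add: independent_unit_vec)
    show "inj_on g R"
    proof (rule inj_onI)
      fix a b assume ab: "a \<in> R" "b \<in> R" "g a = g b"
      then have "\<phi> a = \<phi> b"
        using g_R inj_unit_vec by (simp add: inj_eq)
      then show "a = b"
        using \<phi> ab(1,2) by (auto simp: bij_betw_def inj_on_def)
    qed
    show "g b = 0" if "b \<in> B" for b
      using that g_basis B'(1) by (auto simp: f_def R_def)
    show "x \<in> V.span (B \<union> R)"
      using \<open>x \<in> F2vec n\<close> B' by (auto simp: R_def Un_absorb1)
  qed
  ultimately show ?thesis using that lin by blast
qed

lemma kernel_contains_independent:
  assumes lin: "Vector_Spaces.linear scale_vec scale_vec g" and range: "g ` F2vec n \<subseteq> F2vec t"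
  obtains B where "B \<subseteq> F2vec n" "V.independent B" "card B = n - t" "\<And>x. x \<in> B \<Longrightarrow> g x = 0"
proof -
  define K where "K = {x \<in> F2vec n. g x = 0}"
  obtain BK where BK: "BK \<subseteq> K" "V.independent BK" "K \<subseteq> V.span BK"
    using V.maximal_independent_subset by blast
  obtain Y where Y: "Y \<subseteq> g ` F2vec n" "V.independent Y" "g ` F2vec n \<subseteq> V.span Y"
    using V.maximal_independent_subset by blast
  obtain W where W: "W \<subseteq> F2vec n" "inj_on g W" "Y = g ` W"
    using Y(1) by (auto simp: subset_image_inj)
  have "card W \<le> t"
    using independent_F2vec_card_le(2)[of Y t] Y(1,2) range W(2,3) by (simp add: card_image)
  have spanning: "F2vec n \<subseteq> V.span (BK \<union> W)"
  proof
    fix x assume x: "x \<in> F2vec n"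
    then have "g x \<in> V.span (g ` W)" using Y W by blast
    then obtain w where w: "w \<in> V.span W" "g x = g w"
      by (auto simp: VP.linear_span_image[OF lin])
    have "w \<in> F2vec n"
      using w(1) V.span_minimal[OF W(1) subspace_F2vec] by blast
    then have "x - w \<in> K"
      using x w(2) by (simp add: K_def VP.linear_diff[OF lin] V.subspace_diff[OF subspace_F2vec])
    then have "x - w \<in> V.span (BK \<union> W)"
      using BK(3) V.span_mono[of BK "BK \<union> W"] by blast
    moreover have "w \<in> V.span (BK \<union> W)"
      using w(1) V.span_mono[of W "BK \<union> W"] by blast
    ultimately show "x \<in> V.span (BK \<union> W)"
      by (metis V.span_add diff_add_cancel)
  qed
  have "BK \<union> W \<subseteq> F2vec n"
    using BK(1) W(1) by (auto simp: K_def)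
  then have "finite (BK \<union> W)"
    using finite_F2vec by (rule finite_subset)
  moreover have "unit_vec ` {..<n} \<subseteq> V.span (BK \<union> W)"
    using spanning unit_vec_in_F2vec by blast
  ultimately have "card (unit_vec ` {..<n}) \<le> card (BK \<union> W)"
    using V.independent_span_bound independent_unit_vec by blast
  also have "\<dots> \<le> card BK + card W"
    by (rule card_Un_le)
  finally have "n - t \<le> card BK"
    using \<open>card W \<le> t\<close> inj_unit_vec by (simp add: card_image inj_on_subset)
  then obtain B where "B \<subseteq> BK" "card B = n - t"
    by (rule obtain_subset_with_card_n)
  with BK show thesis
    by (intro that) (auto simp: K_def dest: V.independent_mono)
qed

section \<open>Linear codes and parity checks\<close>

lemma lin_span_eq_span: "finite B \<Longrightarrow> lin_span B = V.span B"
  by (simp add: lin_span_def lincomb_def V.span_finite image_def scale_vec_def)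

lemma lin_indep_iff_independent: "finite B \<Longrightarrow> lin_indep B \<longleftrightarrow> V.independent B"
  by (auto simp: lin_indep_def lincomb_def V.dependent_finite scale_vec_def)

lemma is_linear_code_iff:
  "is_linear_code n k C \<longleftrightarrow> (\<exists>B. B \<subseteq> F2vec n \<and> V.independent B \<and> card B = k \<and> C = V.span B)"
proof
  assume "is_linear_code n k C"
  then show "\<exists>B. B \<subseteq> F2vec n \<and> V.independent B \<and> card B = k \<and> C = V.span B"
    unfolding is_linear_code_def by (metis lin_span_eq_span lin_indep_iff_independent)
next
  assume "\<exists>B. B \<subseteq> F2vec n \<and> V.independent B \<and> card B = k \<and> C = V.span B"
  then obtain B where B: "B \<subseteq> F2vec n" "V.independent B" "card B = k" "C = V.span B"
    by blast
  moreover have "finite B"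
    using B(1) finite_F2vec by (rule finite_subset)
  moreover have "C \<subseteq> F2vec n"
    using B by (simp add: V.span_minimal subspace_F2vec)
  ultimately show "is_linear_code n k C"
    unfolding is_linear_code_def by (metis lin_span_eq_span lin_indep_iff_independent)
qed

lemma le_min_dist_iff:
  assumes code: "is_linear_code n k C" and "0 < k"
  shows "d \<le> min_dist C \<longleftrightarrow> (\<forall>x\<in>C - {0}. d \<le> hamming_weight x)"
proof -
  obtain B where B: "B \<subseteq> F2vec n" "V.independent B" "card B = k" "C = V.span B"
    using code by (auto simp: is_linear_code_iff)
  obtain b where "b \<in> B"
    using B(3) \<open>0 < k\<close> by fastforce
  then have "b \<in> C - {0}"
    using B(2,4) by (auto simp: V.span_base dest: V.dependent_zero)
  moreover have "finite C"
    using code finite_F2vec by (auto simp: is_linear_code_def intro: finite_subset)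
  ultimately show ?thesis
    unfolding min_dist_def by (subst Min_ge_iff) auto
qed

lemma le_d_max_iff:
  assumes "k \<le> n"
  shows "d \<le> d_max n k \<longleftrightarrow> (\<exists>C. is_linear_code n k C \<and> d \<le> min_dist C)"
proof -
  let ?D = "{min_dist C | C. is_linear_code n k C}"
  have "?D \<subseteq> min_dist ` Pow (F2vec n)"
    by (auto simp: is_linear_code_def)
  then have "finite ?D"
    using finite_F2vec by (meson finite_Pow_iff finite_imageI finite_subset)
  have "is_linear_code n k (V.span (unit_vec ` {..<k}))"
    unfolding is_linear_code_iff using assms inj_unit_vec
    by (intro exI[of _ "unit_vec ` {..<k}"])
      (auto simp: unit_vec_in_F2vec independent_unit_vec card_image inj_on_subset)
  then have "?D \<noteq> {}" by blast
  with \<open>finite ?D\<close> show ?thesis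
    unfolding d_max_def by (auto simp: Max_ge_iff)
qed

text \<open>\<open>h 0, \<dots>, h (n - 1)\<close> are the columns of a \<open>t \<times> n\<close> parity-check matrix of a code
  of minimum distance at least \<open>d\<close>.\<close>

definition check_columns :: "nat \<Rightarrow> nat \<Rightarrow> nat \<Rightarrow> (nat \<Rightarrow> vec) \<Rightarrow> bool" where
  "check_columns n t d h \<longleftrightarrow> (\<forall>i<n. h i \<in> F2vec t) \<and>
     (\<forall>S\<subseteq>{..<n}. 0 < card S \<longrightarrow> card S < d \<longrightarrow> sum h S \<noteq> 0)"

lemma check_columnsD:
  assumes "check_columns n t d h"
  shows "i < n \<Longrightarrow> h i \<in> F2vec t"
    and "S \<subseteq> {..<n} \<Longrightarrow> 0 < card S \<Longrightarrow> card S < d \<Longrightarrow> sum h S \<noteq> 0"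
  using assms by (auto simp: check_columns_def)

definition syndrome :: "nat \<Rightarrow> (nat \<Rightarrow> vec) \<Rightarrow> vec \<Rightarrow> vec" where
  "syndrome n h x = (\<Sum>i<n. scale_vec (x i) (h i))"

lemma linear_syndrome: "Vector_Spaces.linear scale_vec scale_vec (syndrome n h)"
  unfolding Vector_Spaces.linear_iff
proof (intro conjI allI)
  fix x y :: vec and c :: bit
  show "syndrome n h (x + y) = syndrome n h x + syndrome n h y"
    by (simp add: syndrome_def V.scale_left_distrib sum.distrib)
  show "syndrome n h (scale_vec c x) = scale_vec c (syndrome n h x)"
    by (simp add: syndrome_def V.scale_sum_right flip: V.scale_scale)
qed (rule V.vector_space_axioms)+

lemma syndrome_unit_vec:
  assumes "i < n" shows "syndrome n h (unit_vec i) = h i"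
proof -
  have "syndrome n h (unit_vec i) = (\<Sum>j<n. if j = i then h j else 0)"
    unfolding syndrome_def by (rule sum.cong) (auto simp: unit_vec_def scale_vec_bit)
  also have "\<dots> = h i"
    using assms by simp
  finally show ?thesis .
qed

lemma syndrome_in_F2vec: "(\<And>i. i < n \<Longrightarrow> h i \<in> F2vec t) \<Longrightarrow> syndrome n h x \<in> F2vec t"
  unfolding syndrome_def by (intro V.subspace_sum[OF subspace_F2vec] V.subspace_scale[OF subspace_F2vec]) auto

lemma check_columns_of_code:
  assumes code: "is_linear_code n (n - t) C" and d: "d \<le> min_dist C" and "t < n"
  obtains h where "check_columns n t d h"
proof -
  obtain B where B: "B \<subseteq> F2vec n" "V.independent B" "card B = n - t" and C: "C = V.span B"
    using code by (auto simp: is_linear_code_iff)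
  have "card B + t = n"
    using B(3) \<open>t < n\<close> by simp
  then obtain g where g: "Vector_Spaces.linear scale_vec scale_vec g" "g ` F2vec n \<subseteq> F2vec t"
    and ker: "\<And>x. x \<in> F2vec n \<Longrightarrow> g x = 0 \<longleftrightarrow> x \<in> V.span B"
    using linear_map_with_kernel[OF B(1,2)] by blast
  have "check_columns n t d (\<lambda>i. g (unit_vec i))"
    unfolding check_columns_def
  proof (intro conjI allI impI)
    show "g (unit_vec i) \<in> F2vec t" if "i < n" for i
      using g(2) unit_vec_in_F2vec[OF that] by blast
    fix S assume S: "S \<subseteq> {..<n}" "0 < card S" "card S < d"
    then have "indicator S \<in> F2vec n" "finite S" "S \<noteq> {}"
      by (auto simp: F2vec_eq_indicators card_gt_0_iff)
    moreover have "indicator S \<notin> C"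
    proof
      assume "indicator S \<in> C"
      then have "d \<le> hamming_weight (indicator S :: vec)"
        using le_min_dist_iff[OF code] d \<open>t < n\<close> indicator_nonzero[OF \<open>S \<noteq> {}\<close>] by simp
      then show False
        using S(3) by (simp add: hamming_weight_indicator)
    qed
    ultimately show "(\<Sum>i\<in>S. g (unit_vec i)) \<noteq> 0"
      using ker[of "indicator S"] C linear_indicator[OF g(1), of S] by simp
  qed
  then show thesis by (rule that)
qed

lemma code_of_check_columns:
  assumes h: "check_columns n t d h" and "t < n"
  obtains C where "is_linear_code n (n - t) C" "d \<le> min_dist C"
proof -
  have range: "syndrome n h ` F2vec n \<subseteq> F2vec t"
    using check_columnsD(1)[OF h] by (simp add: image_subset_iff syndrome_in_F2vec)
  obtain B where B: "B \<subseteq> F2vec n" "V.independent B" "card B = n - t"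
    and ker: "\<And>x. x \<in> B \<Longrightarrow> syndrome n h x = 0"
    using kernel_contains_independent[OF linear_syndrome range] by blast
  define C where "C = V.span B"
  have code: "is_linear_code n (n - t) C"
    unfolding is_linear_code_iff C_def using B by blast
  have "d \<le> min_dist C"
    unfolding le_min_dist_iff[OF code zero_less_diff[THEN iffD2, OF \<open>t < n\<close>]]
  proof
    fix x assume x: "x \<in> C - {0}"
    then have "x \<in> F2vec n"
      using code by (auto simp: is_linear_code_def)
    then obtain S where S: "S \<subseteq> {..<n}" "x = indicator S"
      by (auto simp: F2vec_eq_indicators)
    then have "finite S" "S \<noteq> {}"
      using x finite_subset by auto
    have "sum h S = syndrome n h x"
      using S \<open>finite S\<close>
      by (auto simp: linear_indicator[OF linear_syndrome] syndrome_unit_vec intro!: sum.cong)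
    also have "\<dots> = 0"
      using VP.linear_eq_0_on_span[OF linear_syndrome ker] x by (simp add: C_def)
    finally have "\<not> card S < d"
      using check_columnsD(2)[OF h S(1)] \<open>finite S\<close> \<open>S \<noteq> {}\<close> by (auto simp: card_gt_0_iff)
    then show "d \<le> hamming_weight x"
      using S(2) by (simp add: hamming_weight_indicator)
  qed
  with code show thesis by (rule that)
qed

lemma le_d_max_iff_check_columns:
  assumes "t < n"
  shows "d \<le> d_max n (n - t) \<longleftrightarrow> (\<exists>h. check_columns n t d h)"
  using le_d_max_iff[of "n - t" n d] check_columns_of_code[OF _ _ assms]
    code_of_check_columns[OF _ assms] by (metis diff_le_self)

section \<open>Sets without short zero sums\<close>

definition no_zero_sum_below :: "nat \<Rightarrow> vec set \<Rightarrow> bool" where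
  "no_zero_sum_below d A \<longleftrightarrow> (\<forall>S\<subseteq>A. 0 < card S \<longrightarrow> card S < d \<longrightarrow> \<Sum>S \<noteq> 0)"

lemma no_zero_sum_belowD:
  "no_zero_sum_below d A \<Longrightarrow> S \<subseteq> A \<Longrightarrow> 0 < card S \<Longrightarrow> card S < d \<Longrightarrow> \<Sum>S \<noteq> 0"
  by (auto simp: no_zero_sum_below_def)

lemma no_zero_sum_below_image:
  assumes "inj_on h I"
  shows "no_zero_sum_below d (h ` I) \<longleftrightarrow> (\<forall>T\<subseteq>I. 0 < card T \<longrightarrow> card T < d \<longrightarrow> sum h T \<noteq> 0)"
proof -
  have image: "card (h ` T) = card T" "\<Sum>(h ` T) = sum h T" if "T \<subseteq> I" for T
    using inj_on_subset[OF assms that] by (simp_all add: card_image sum.reindex)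
  have "no_zero_sum_below d (h ` I) \<longleftrightarrow>
      (\<forall>T\<subseteq>I. 0 < card (h ` T) \<longrightarrow> card (h ` T) < d \<longrightarrow> \<Sum>(h ` T) \<noteq> 0)"
    unfolding no_zero_sum_below_def subset_image_iff by blast
  also have "\<dots> \<longleftrightarrow> (\<forall>T\<subseteq>I. 0 < card T \<longrightarrow> card T < d \<longrightarrow> sum h T \<noteq> 0)"
    by (simp add: image)
  finally show ?thesis .
qed

lemma inj_on_check_columns:
  assumes h: "check_columns n t d h" and "3 \<le> d"
  shows "inj_on h {..<n}"
proof (rule inj_onI)
  fix i j assume ij: "i \<in> {..<n}" "j \<in> {..<n}" "h i = h j"
  show "i = j"
  proof (rule ccontr)
    assume "i \<noteq> j"
    then have "sum h {i, j} = 0" "card {i, j} = 2"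
      using ij(3) by simp_all
    then show False
      using check_columnsD(2)[OF h, of "{i, j}"] ij(1,2) \<open>3 \<le> d\<close> by simp
  qed
qed

lemma exists_check_columns_iff:
  assumes "3 \<le> d"
  shows "(\<exists>h. check_columns n t d h) \<longleftrightarrow> (\<exists>A\<subseteq>F2vec t. card A = n \<and> no_zero_sum_below d A)"
proof
  assume "\<exists>h. check_columns n t d h"
  then obtain h where h: "check_columns n t d h" ..
  have inj: "inj_on h {..<n}"
    using h assms by (rule inj_on_check_columns)
  show "\<exists>A\<subseteq>F2vec t. card A = n \<and> no_zero_sum_below d A"
  proof (intro exI conjI)
    show "h ` {..<n} \<subseteq> F2vec t" "no_zero_sum_below d (h ` {..<n})"
      using h inj by (auto simp: check_columns_def no_zero_sum_below_image)
    show "card (h ` {..<n}) = n"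
      using inj by (simp add: card_image)
  qed
next
  assume "\<exists>A\<subseteq>F2vec t. card A = n \<and> no_zero_sum_below d A"
  then obtain A where A: "A \<subseteq> F2vec t" "card A = n" "no_zero_sum_below d A"
    by blast
  have "finite A"
    using A(1) finite_F2vec by (rule finite_subset)
  then obtain h where h: "bij_betw h {..<n} A"
    using ex_bij_betw_nat_finite A(2) by (auto simp: atLeast0LessThan)
  then have "check_columns n t d h"
    using A(1,3) no_zero_sum_below_image[of h "{..<n}" d] by (auto simp: bij_betw_def check_columns_def)
  then show "\<exists>h. check_columns n t d h" by blast
qed

lemma le_d_max_iff_no_zero_sum_below:
  assumes "t < n" "3 \<le> d"
  shows "d \<le> d_max n (n - t) \<longleftrightarrow> (\<exists>A\<subseteq>F2vec t. card A = n \<and> no_zero_sum_below d A)"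
  using le_d_max_iff_check_columns[OF assms(1)] exists_check_columns_iff[OF assms(2)] by simp

lemma zero_notin_if_no_zero_sum_below: "no_zero_sum_below d A \<Longrightarrow> 1 < d \<Longrightarrow> 0 \<notin> A"
  using no_zero_sum_belowD[of d A "{0}"] by auto

lemma no_zero_sum_below_3_iff: "no_zero_sum_below 3 A \<longleftrightarrow> 0 \<notin> A"
proof
  assume "no_zero_sum_below 3 A"
  then show "0 \<notin> A"
    by (rule zero_notin_if_no_zero_sum_below) simp
next
  assume "0 \<notin> A"
  show "no_zero_sum_below 3 A"
    unfolding no_zero_sum_below_def
  proof (intro allI impI)
    fix S assume S: "S \<subseteq> A" "0 < card S" "card S < 3"
    then have "card S = 1 \<or> card S = 2" by linarith
    then show "\<Sum>S \<noteq> 0"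
      using S(1) \<open>0 \<notin> A\<close> by (auto simp: card_1_singleton_iff card_2_iff vec_add_eq_0_iff)
  qed
qed

lemma ex_subset_card_iff: "finite X \<Longrightarrow> (\<exists>A\<subseteq>X. card A = n) \<longleftrightarrow> n \<le> card X"
  by (metis card_mono obtain_subset_with_card_n)

lemma exists_no_zero_sum_below_3_iff:
  "(\<exists>A\<subseteq>F2vec t. card A = n \<and> no_zero_sum_below 3 A) \<longleftrightarrow> n < 2 ^ t"
proof -
  have "0 \<in> F2vec t" by (simp add: F2vec_def)
  then have "card (F2vec t - {0}) = 2 ^ t - 1"
    by (simp add: card_F2vec finite_F2vec)
  moreover have "(\<exists>A\<subseteq>F2vec t. card A = n \<and> 0 \<notin> A) \<longleftrightarrow> (\<exists>A\<subseteq>F2vec t - {0}. card A = n)"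
    by blast
  moreover have "n \<le> 2 ^ t - 1 \<longleftrightarrow> n < 2 ^ t"
    using zero_less_power[of "2 :: nat" t] by arith
  ultimately show ?thesis
    by (simp add: no_zero_sum_below_3_iff ex_subset_card_iff finite_F2vec)
qed

lemma sum_eq_member_if_no_zero_sum_below:
  assumes A: "no_zero_sum_below d A" and T: "T \<subseteq> A" "finite T" "card T + 1 < d"
    and a: "a \<in> A" "\<Sum>T = a"
  shows "T = {a}"
proof (cases "a \<in> T")
  case True
  then have "\<Sum>(T - {a}) = 0"
    using T(2) a(2) by (simp add: sum.remove)
  moreover have "card (T - {a}) < d"
    using T(3) card_Diff1_le[of T a] by linarith
  ultimately have "T - {a} = {}"
    using no_zero_sum_belowD[OF A, of "T - {a}"] T(1,2) by (auto simp: card_gt_0_iff)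
  with True show ?thesis by blast
next
  case False
  then have "\<Sum>(insert a T) = 0"
    using T(2) a(2) by simp
  moreover have "insert a T \<subseteq> A" "0 < card (insert a T)" "card (insert a T) < d"
    using False T a by auto
  ultimately show ?thesis
    using no_zero_sum_belowD[OF A] by blast
qed

lemma sum_translate:
  assumes "finite S"
  shows "\<Sum>((\<lambda>x. x + a) ` S) = \<Sum>S + (if even (card S) then 0 else a :: vec)"
proof -
  have "\<Sum>((\<lambda>x. x + a) ` S) = (\<Sum>x\<in>S. x + a)"
    by (simp add: sum.reindex inj_on_def)
  also have "\<dots> = \<Sum>S + (\<Sum>x\<in>S. a)"
    by (simp add: sum.distrib)
  also have "(\<Sum>x\<in>S. a) = (if even (card S) then 0 else a)"
    by (auto simp: fun_eq_iff sum_fun_apply of_nat_bit)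
  finally show ?thesis .
qed

lemma no_zero_sum_below_lift:
  assumes U: "U \<subseteq> F2vec s"
    and even_sums: "\<And>T. T \<subseteq> U \<Longrightarrow> 0 < card T \<Longrightarrow> card T < d \<Longrightarrow> even (card T) \<Longrightarrow> \<Sum>T \<noteq> 0"
  shows "no_zero_sum_below d ((\<lambda>u. u + unit_vec s) ` U)"
  unfolding no_zero_sum_below_def
proof (intro allI impI)
  fix S assume S: "S \<subseteq> (\<lambda>u. u + unit_vec s) ` U" "0 < card S" "card S < d"
  then have "finite S"
    using card_gt_0_iff by blast
  show "\<Sum>S \<noteq> 0"
  proof (cases "even (card S)")
    case True
    let ?T = "(\<lambda>x. x + unit_vec s) ` S"
    have "?T \<subseteq> U"
      using S(1) by (auto simp: add.assoc)
    moreover have "card ?T = card S"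
      by (simp add: card_image inj_on_def)
    moreover have "\<Sum>?T = \<Sum>S"
      using sum_translate[OF \<open>finite S\<close>] True by simp
    ultimately show ?thesis
      using even_sums S(2,3) True by metis
  next
    case False
    have ones: "x s = 1" if x: "x \<in> S" for x
    proof -
      obtain u where "u \<in> U" "x = u + unit_vec s"
        using x S(1) by blast
      moreover from this(1) have "u s = 0"
        using U by (auto simp: F2vec_def)
      ultimately show ?thesis
        by (simp add: unit_vec_def)
    qed
    have "(\<Sum>S) s = (\<Sum>x\<in>S. 1)"
      unfolding sum_fun_apply by (rule sum.cong) (simp_all add: ones)
    then have "(\<Sum>S) s = 1"
      using False by (simp add: of_nat_bit)
    then show ?thesis by auto
  qed
qed

lemma card_le_if_no_zero_sum_below_4:
  assumes A: "A \<subseteq> F2vec (Suc s)" "no_zero_sum_below 4 A"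
  shows "card A \<le> 2 ^ s"
proof (cases "A = {}")
  case False
  then obtain a where "a \<in> A" by blast
  have "finite A"
    using A(1) finite_F2vec by (rule finite_subset)
  have "0 \<notin> A"
    using A(2) by (rule zero_notin_if_no_zero_sum_below) simp
  have disjoint: "A \<inter> (\<lambda>x. x + a) ` A = {}"
  proof (rule ccontr)
    assume "A \<inter> (\<lambda>x. x + a) ` A \<noteq> {}"
    then obtain x y where xy: "x \<in> A" "y \<in> A" "x = y + a" by blast
    then have "x \<noteq> y"
      using \<open>0 \<notin> A\<close> \<open>a \<in> A\<close> by auto
    moreover have "\<Sum>{x, y} = a"
      using xy(3) \<open>x \<noteq> y\<close> by (simp add: add.commute add.left_commute)
    ultimately have "{x, y} = {a}"
      using sum_eq_member_if_no_zero_sum_below[OF A(2), of "{x, y}" a] xy(1,2) \<open>a \<in> A\<close> by simp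
    with \<open>x \<noteq> y\<close> show False by auto
  qed
  have "(\<lambda>x. x + a) ` A \<subseteq> F2vec (Suc s)"
    using A(1) \<open>a \<in> A\<close> by (auto intro: V.subspace_add[OF subspace_F2vec])
  then have "card (A \<union> (\<lambda>x. x + a) ` A) \<le> card (F2vec (Suc s))"
    using A(1) by (intro card_mono finite_F2vec) auto
  moreover have "card (A \<union> (\<lambda>x. x + a) ` A) = 2 * card A"
    using disjoint \<open>finite A\<close> by (simp add: card_Un_disjoint card_image inj_on_def)
  ultimately show ?thesis
    by (simp add: card_F2vec)
qed simp

lemma exists_no_zero_sum_below_4_iff:
  "(\<exists>A\<subseteq>F2vec (Suc s). card A = n \<and> no_zero_sum_below 4 A) \<longleftrightarrow> n \<le> 2 ^ s"
proof
  assume "\<exists>A\<subseteq>F2vec (Suc s). card A = n \<and> no_zero_sum_below 4 A"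
  then show "n \<le> 2 ^ s"
    using card_le_if_no_zero_sum_below_4 by blast
next
  assume "n \<le> 2 ^ s"
  then obtain U where U: "U \<subseteq> F2vec s" "card U = n"
    using ex_subset_card_iff[OF finite_F2vec, of s n] by (auto simp: card_F2vec)
  let ?A = "(\<lambda>u. u + unit_vec s) ` U"
  have "?A \<subseteq> F2vec (Suc s)"
    using U(1) by (auto simp: F2vec_def unit_vec_def)
  moreover have "card ?A = n"
    using U(2) by (simp add: card_image inj_on_def)
  moreover have "no_zero_sum_below 4 ?A"
  proof (rule no_zero_sum_below_lift[OF U(1)])
    fix T assume "T \<subseteq> U" "0 < card T" "card T < 4" "even (card T)"
    then have "card T = 2" by presburger
    then show "\<Sum>T \<noteq> 0"
      by (auto simp: card_2_iff vec_add_eq_0_iff)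
  qed
  ultimately show "\<exists>A\<subseteq>F2vec (Suc s). card A = n \<and> no_zero_sum_below 4 A"
    by blast
qed

section \<open>Sidon sets\<close>

lemma sidon_iff_sum_4: "sidon M \<longleftrightarrow> (\<forall>S\<subseteq>M. card S = 4 \<longrightarrow> \<Sum>S \<noteq> 0)"
proof
  assume sidon: "sidon M"
  show "\<forall>S\<subseteq>M. card S = 4 \<longrightarrow> \<Sum>S \<noteq> 0"
  proof (intro allI impI)
    fix S assume S: "S \<subseteq> M" "card S = 4"
    have "card S = Suc 3"
      using S(2) by simp
    then obtain a T where "S = insert a T" "a \<notin> T" "card T = 3"
      by (blast dest: card_eq_SucD)
    then obtain b c d where abcd: "S = {a, b, c, d}" "distinct [a, b, c, d]"
      by (auto simp: card_3_iff)
    then have "a + b \<noteq> c + d"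
      using sidon S(1) unfolding sidon_def by simp
    moreover have "\<Sum>S = (a + b) + (c + d)"
      using abcd by (simp add: add.assoc)
    ultimately show "\<Sum>S \<noteq> 0"
      by (metis vec_add_eq_0_iff)
  qed
next
  assume sums: "\<forall>S\<subseteq>M. card S = 4 \<longrightarrow> \<Sum>S \<noteq> 0"
  show "sidon M"
    unfolding sidon_def
  proof (intro ballI impI)
    fix a b c d assume "a \<in> M" "b \<in> M" "c \<in> M" "d \<in> M" and abcd: "distinct [a, b, c, d]"
    then have "{a, b, c, d} \<subseteq> M" "card {a, b, c, d} = 4"
      by auto
    then have "\<Sum>{a, b, c, d} \<noteq> 0"
      using sums by blast
    moreover have "\<Sum>{a, b, c, d} = (a + b) + (c + d)"
      using abcd by (simp add: add.assoc)
    ultimately show "a + b \<noteq> c + d"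
      by (metis vec_add_eq_0_iff)
  qed
qed

lemma sidon_subset: "sidon M \<Longrightarrow> N \<subseteq> M \<Longrightarrow> sidon N"
  unfolding sidon_def by blast

lemma sidon_translate:
  assumes "sidon M" shows "sidon ((\<lambda>x. x + a) ` M)"
  unfolding sidon_iff_sum_4
proof (intro allI impI)
  fix S assume S: "S \<subseteq> (\<lambda>x. x + a) ` M" "card S = 4"
  let ?T = "(\<lambda>x. x + a) ` S"
  have "?T \<subseteq> M"
    using S(1) by (auto simp: add.assoc)
  moreover have "card ?T = 4"
    using S(2) by (simp add: card_image inj_on_def)
  moreover have "\<Sum>?T = \<Sum>S"
    using sum_translate[of S a] S(2) by (simp add: card_ge_0_finite)
  ultimately show "\<Sum>S \<noteq> 0"
    using assms unfolding sidon_iff_sum_4 by metis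
qed

lemma finite_sidon_cards: "finite {card M | M. M \<subseteq> F2vec t \<and> sidon M}"
proof -
  have "{card M | M. M \<subseteq> F2vec t \<and> sidon M} \<subseteq> card ` Pow (F2vec t)"
    by auto
  then show ?thesis
    using finite_F2vec by (meson finite_Pow_iff finite_imageI finite_subset)
qed

lemma card_le_s_max: "M \<subseteq> F2vec t \<Longrightarrow> sidon M \<Longrightarrow> card M \<le> s_max t"
  unfolding s_max_def by (intro Max_ge[OF finite_sidon_cards]) auto

lemma s_max_attained:
  obtains M where "M \<subseteq> F2vec t" "sidon M" "card M = s_max t"
proof -
  have "sidon {}" by (simp add: sidon_def)
  then have "card {} \<in> {card M | M. M \<subseteq> F2vec t \<and> sidon M}"
    by (intro CollectI exI[of _ "{}"]) simp
  then have "{card M | M. M \<subseteq> F2vec t \<and> sidon M} \<noteq> {}"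
    by (metis empty_iff)
  then have "s_max t \<in> {card M | M. M \<subseteq> F2vec t \<and> sidon M}"
    unfolding s_max_def by (rule Max_in[OF finite_sidon_cards])
  then show thesis
    by (auto intro: that)
qed

lemma sidon_insert_zero_if_no_zero_sum_below_5:
  assumes A: "no_zero_sum_below 5 A"
  shows "sidon (insert 0 A)"
  unfolding sidon_iff_sum_4
proof (intro allI impI)
  fix S assume S: "S \<subseteq> insert 0 A" "card S = 4"
  then have "finite S" by (simp add: card_ge_0_finite)
  have "S - {0} \<subseteq> A" "\<Sum>(S - {0}) = \<Sum>S"
    using S(1) \<open>finite S\<close> by (auto simp: sum_diff1)
  moreover have "0 < card (S - {0})" "card (S - {0}) < 5"
    using S(2) by (auto simp: card_Diff_singleton_if)
  ultimately show "\<Sum>S \<noteq> 0"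
    using no_zero_sum_belowD[OF A] by metis
qed

lemma no_zero_sum_below_5_iff: "no_zero_sum_below 5 A \<longleftrightarrow> 0 \<notin> A \<and> sidon (insert 0 A)"
proof
  assume A: "no_zero_sum_below 5 A"
  then have "0 \<notin> A"
    by (rule zero_notin_if_no_zero_sum_below) simp
  with A show "0 \<notin> A \<and> sidon (insert 0 A)"
    by (simp add: sidon_insert_zero_if_no_zero_sum_below_5)
next
  assume A: "0 \<notin> A \<and> sidon (insert 0 A)"
  show "no_zero_sum_below 5 A"
    unfolding no_zero_sum_below_def
  proof (intro allI impI)
    fix S assume S: "S \<subseteq> A" "0 < card S" "card S < 5"
    then have "finite S" "0 \<notin> S"
      using A card_gt_0_iff by blast+
    consider "card S < 3" | "card S = 3" | "card S = 4"
      using S(3) by linarith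
    then show "\<Sum>S \<noteq> 0"
    proof cases
      case 1
      then show ?thesis
        using A S(1,2) no_zero_sum_below_3_iff no_zero_sum_belowD by blast
    next
      case 2
      then have "card (insert 0 S) = 4" "\<Sum>(insert 0 S) = \<Sum>S"
        using \<open>finite S\<close> \<open>0 \<notin> S\<close> by simp_all
      then show ?thesis
        using A S(1) unfolding sidon_iff_sum_4 by (metis insert_mono)
    next
      case 3
      then show ?thesis
        using A S(1) unfolding sidon_iff_sum_4 by (meson subset_insertI2)
    qed
  qed
qed

lemma exists_no_zero_sum_below_5_iff:
  "(\<exists>A\<subseteq>F2vec t. card A = n \<and> no_zero_sum_below 5 A) \<longleftrightarrow> n < s_max t"
proof
  assume "\<exists>A\<subseteq>F2vec t. card A = n \<and> no_zero_sum_below 5 A"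
  then obtain A where A: "A \<subseteq> F2vec t" "card A = n" "0 \<notin> A" "sidon (insert 0 A)"
    by (auto simp: no_zero_sum_below_5_iff)
  have "finite A"
    using A(1) finite_F2vec by (rule finite_subset)
  have "insert 0 A \<subseteq> F2vec t"
    using A(1) by (simp add: F2vec_def)
  then have "card (insert 0 A) \<le> s_max t"
    using A(4) by (rule card_le_s_max)
  then show "n < s_max t"
    using A(2,3) \<open>finite A\<close> by simp
next
  assume n: "n < s_max t"
  obtain M where M: "M \<subseteq> F2vec t" "sidon M" "card M = s_max t"
    by (rule s_max_attained)
  then obtain m where "m \<in> M"
    using n by fastforce
  define M' where "M' = (\<lambda>x. x + m) ` M"
  have "M' \<subseteq> F2vec t"
    using M(1) \<open>m \<in> M\<close> by (auto simp: M'_def intro: V.subspace_add[OF subspace_F2vec])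
  have "sidon M'"
    unfolding M'_def using M(2) by (rule sidon_translate)
  have "0 \<in> M'"
    using \<open>m \<in> M\<close> by (force simp: M'_def)
  have "card M' = s_max t"
    using M(3) by (simp add: M'_def card_image inj_on_def)
  then have "n \<le> card (M' - {0})"
    using n \<open>0 \<in> M'\<close> by simp
  then obtain A where A: "A \<subseteq> M' - {0}" "card A = n"
    by (rule obtain_subset_with_card_n)
  have "no_zero_sum_below 5 A"
    unfolding no_zero_sum_below_5_iff using A(1) sidon_subset[OF \<open>sidon M'\<close>] \<open>0 \<in> M'\<close> by blast
  then show "\<exists>A\<subseteq>F2vec t. card A = n \<and> no_zero_sum_below 5 A"
    using A \<open>M' \<subseteq> F2vec t\<close> by blast
qed

lemma linear_map_killing_vector:
  assumes "a \<in> F2vec (Suc s)" "a \<noteq> 0"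
  obtains g where "Vector_Spaces.linear scale_vec scale_vec g" "g ` F2vec (Suc s) \<subseteq> F2vec s"
    "\<And>x. x \<in> F2vec (Suc s) \<Longrightarrow> g x = 0 \<longleftrightarrow> x = 0 \<or> x = a"
proof -
  have "V.independent {a}"
    using assms(2) by (simp add: V.independent_insert)
  moreover have "V.span {a} = {0, a}"
    by (auto simp: V.span_singleton scale_vec_bit intro: range_eqI[of _ _ 0] range_eqI[of _ _ 1])
  ultimately show thesis
    using linear_map_with_kernel[of "{a}" "Suc s" s] assms(1) that by auto
qed

lemma subset_singleton_if_sum_zero_or_member:
  assumes A: "no_zero_sum_below 6 A" "a \<in> A"
    and T: "T \<subseteq> A" "finite T" "card T \<le> 4" "\<Sum>T = 0 \<or> \<Sum>T = a"
  shows "T \<subseteq> {a}"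
  using T(4)
proof
  assume "\<Sum>T = 0"
  then show ?thesis
    using no_zero_sum_belowD[OF A(1) T(1)] T(2,3) by (auto simp: card_gt_0_iff)
next
  assume "\<Sum>T = a"
  then show ?thesis
    using sum_eq_member_if_no_zero_sum_below[OF A(1) T(1,2)] T(3) A(2) by simp
qed

lemma sidon_image_if_no_zero_sum_below_6:
  assumes A: "A \<subseteq> F2vec (Suc s)" "no_zero_sum_below 6 A"
  obtains M where "M \<subseteq> F2vec s" "sidon M" "card M = card A"
proof (cases "A = {}")
  case True
  then show ?thesis
    using that[of "{}"] by (simp add: sidon_def)
next
  case False
  then obtain a where "a \<in> A" by blast
  have "finite A"
    using A(1) finite_F2vec by (rule finite_subset)
  have "a \<noteq> 0"
    using zero_notin_if_no_zero_sum_below[OF A(2)] \<open>a \<in> A\<close> by auto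
  then obtain g where g: "Vector_Spaces.linear scale_vec scale_vec g" "g ` F2vec (Suc s) \<subseteq> F2vec s"
    and ker: "\<And>x. x \<in> F2vec (Suc s) \<Longrightarrow> g x = 0 \<longleftrightarrow> x = 0 \<or> x = a"
    using linear_map_killing_vector A(1) \<open>a \<in> A\<close> by blast
  have kernel_sums: "T \<subseteq> {a}" if T: "T \<subseteq> A" "card T \<le> 4" "g (\<Sum>T) = 0" for T
  proof (rule subset_singleton_if_sum_zero_or_member[OF A(2) \<open>a \<in> A\<close> T(1) _ T(2)])
    show "finite T"
      using T(1) \<open>finite A\<close> by (rule finite_subset)
    have "\<Sum>T \<in> F2vec (Suc s)"
      using T(1) A(1) by (intro V.subspace_sum[OF subspace_F2vec]) auto
    then show "\<Sum>T = 0 \<or> \<Sum>T = a"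
      using ker T(3) by blast
  qed
  have "inj_on g A"
  proof (rule inj_onI)
    fix x y assume xy: "x \<in> A" "y \<in> A" "g x = g y"
    show "x = y"
    proof (rule ccontr)
      assume "x \<noteq> y"
      then have "g (\<Sum>{x, y}) = 0"
        using xy(3) by (simp add: VP.linear_add[OF g(1)])
      then have "{x, y} \<subseteq> {a}"
        using kernel_sums[of "{x, y}"] xy(1,2) \<open>x \<noteq> y\<close> by simp
      with \<open>x \<noteq> y\<close> show False by auto
    qed
  qed
  have "sidon (g ` A)"
    unfolding sidon_iff_sum_4
  proof (intro allI impI notI)
    fix S assume S: "S \<subseteq> g ` A" "card S = 4" "\<Sum>S = 0"
    then obtain T where T: "T \<subseteq> A" "S = g ` T"
      by (auto simp: subset_image_iff)
    have inj_T: "inj_on g T"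
      using \<open>inj_on g A\<close> T(1) by (rule inj_on_subset)
    then have "card T = 4"
      using T(2) S(2) by (simp add: card_image)
    moreover have "g (\<Sum>T) = 0"
      using S(3) T(2) inj_T by (simp add: sum.reindex VP.linear_sum[OF g(1)])
    ultimately have "T \<subseteq> {a}"
      using kernel_sums[OF T(1)] by simp
    then show False
      using card_mono[of "{a}" T] \<open>card T = 4\<close> by simp
  qed
  moreover have "g ` A \<subseteq> F2vec s"
    using g(2) A(1) by blast
  moreover have "card (g ` A) = card A"
    using \<open>inj_on g A\<close> by (simp add: card_image)
  ultimately show thesis
    using that by blast
qed

lemma exists_no_zero_sum_below_6_iff:
  "(\<exists>A\<subseteq>F2vec (Suc s). card A = n \<and> no_zero_sum_below 6 A) \<longleftrightarrow> n \<le> s_max s"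
proof
  assume "\<exists>A\<subseteq>F2vec (Suc s). card A = n \<and> no_zero_sum_below 6 A"
  then obtain A where A: "A \<subseteq> F2vec (Suc s)" "card A = n" "no_zero_sum_below 6 A"
    by blast
  then obtain M where "M \<subseteq> F2vec s" "sidon M" "card M = n"
    by (metis sidon_image_if_no_zero_sum_below_6)
  then show "n \<le> s_max s"
    by (metis card_le_s_max)
next
  assume "n \<le> s_max s"
  obtain M where M: "M \<subseteq> F2vec s" "sidon M" "card M = s_max s"
    by (rule s_max_attained)
  then obtain U where U: "U \<subseteq> M" "card U = n"
    using \<open>n \<le> s_max s\<close> by (metis obtain_subset_with_card_n)
  have "U \<subseteq> F2vec s" "sidon U"
    using U(1) M(1,2) sidon_subset by auto
  let ?A = "(\<lambda>u. u + unit_vec s) ` U"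
  have "?A \<subseteq> F2vec (Suc s)"
    using \<open>U \<subseteq> F2vec s\<close> by (auto simp: F2vec_def unit_vec_def)
  moreover have "card ?A = n"
    using U(2) by (simp add: card_image inj_on_def)
  moreover have "no_zero_sum_below 6 ?A"
  proof (rule no_zero_sum_below_lift[OF \<open>U \<subseteq> F2vec s\<close>])
    fix T assume T: "T \<subseteq> U" "0 < card T" "card T < 6" "even (card T)"
    then have "card T = 2 \<or> card T = 4" by presburger
    then show "\<Sum>T \<noteq> 0"
    proof
      assume "card T = 2"
      then show ?thesis by (auto simp: card_2_iff vec_add_eq_0_iff)
    next
      assume "card T = 4"
      then show ?thesis
        using \<open>sidon U\<close> T(1) unfolding sidon_iff_sum_4 by blast
    qed
  qed
  ultimately show "\<exists>A\<subseteq>F2vec (Suc s). card A = n \<and> no_zero_sum_below 6 A"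
    by blast
qed

theorem proposition3p4:
  fixes n t :: nat
  assumes "t \<ge> 2" and "n > t"
  shows "(d_max n (n - t) = 3 \<longleftrightarrow> 2 ^ (t - 1) < n \<and> n < 2 ^ t)
       \<and> (d_max n (n - t) = 4 \<longleftrightarrow> s_max t \<le> n \<and> n \<le> 2 ^ (t - 1))
       \<and> (d_max n (n - t) = 5 \<longleftrightarrow> s_max (t - 1) < n \<and> n < s_max t)
       \<and> (d_max n (n - t) \<ge> 6 \<longleftrightarrow> n \<le> s_max (t - 1))"
proof -
  define D where "D = d_max n (n - t)"
  obtain s where t: "t = Suc s"
    using assms(1) by (cases t) auto
  have ge: "d \<le> D \<longleftrightarrow> (\<exists>A\<subseteq>F2vec t. card A = n \<and> no_zero_sum_below d A)" if "3 \<le> d" for d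
    unfolding D_def using assms(2) that by (rule le_d_max_iff_no_zero_sum_below)
  have "3 \<le> D \<longleftrightarrow> n < 2 ^ t"
    using ge[of 3] by (simp add: exists_no_zero_sum_below_3_iff)
  moreover have "4 \<le> D \<longleftrightarrow> n \<le> 2 ^ (t - 1)"
    using ge[of 4] by (simp add: t exists_no_zero_sum_below_4_iff)
  moreover have "5 \<le> D \<longleftrightarrow> n < s_max t"
    using ge[of 5] by (simp add: exists_no_zero_sum_below_5_iff)
  moreover have "6 \<le> D \<longleftrightarrow> n \<le> s_max (t - 1)"
    using ge[of 6] by (simp add: t exists_no_zero_sum_below_6_iff)
  moreover have "D = 3 \<longleftrightarrow> 3 \<le> D \<and> \<not> 4 \<le> D" "D = 4 \<longleftrightarrow> 4 \<le> D \<and> \<not> 5 \<le> D"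
    "D = 5 \<longleftrightarrow> 5 \<le> D \<and> \<not> 6 \<le> D"
    by linarith+
  ultimately show ?thesis
    unfolding D_def[symmetric] by (auto simp: not_le not_less)
qed

end
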